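(* Assume the setting and conditions [C.1] and [C.2] described in the context, and fix $\boldsymbol{\theta} = (\boldsymbol{\theta}_1, \boldsymbol{\theta}_2) \in \boldsymbol{\Theta}$. Let $\mathbb{S} \subseteq \mathbb{Z}$ be a set of neighborhood structures such that $n_{\max}(\mathbf{z}) \leq n_{\max}$ for all $\mathbf{z} \in \mathbb{S}$. Here $n_{\max}$ is a number that may increase with $n$, subject to $n_{\max} \leq n$. Then for every $\delta > 0$ there exist $c > 0$ and $n_0 > 0$ such that for all $n > n_0$, $$\mathbb{P}\left(\max_{\mathbf{z}\in\mathbb{S}} \left|\log p_{\boldsymbol{\eta}(\boldsymbol{\theta}, \mathbf{z})}(\mathbf{X}) - \log p_{\boldsymbol{\eta}(\boldsymbol{\theta}_1, \boldsymbol{\theta}_2=\mathbf{0}, \mathbf{z})}(\mathbf{X})\right| \geq c\,(1+\delta)^{1/2}\, \|\mathscr{A}\|_\infty^2\, n_{\max}^2\, n\,(\log n)^{3/2}\right) \leq 2\exp\left(-\frac{\delta\, n \log n}{4}\right).$$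
   Context: **Random graph.** Nodes are $\{1,\dots,n\}$. For each $i<j$ there is an undirected edge variable $X_{i,j}$ taking values in a countable set $\mathbb{X}_{i,j}$. Write $\mathbf{X} = (X_{i,j})_{i<j}$ and $\mathbb{X} = \prod_{i<j}\mathbb{X}_{i,j}$, which is countable. **Exponential family.** The model has probability mass functions $$p_{\boldsymbol{\eta}}(\mathbf{x}) = \exp(\langle \boldsymbol{\eta}, s(\mathbf{x})\rangle - \psi(\boldsymbol{\eta})), \qquad \psi(\boldsymbol{\eta}) = \log\sum_{\mathbf{x}'\in\mathbb{X}} \exp\langle \boldsymbol{\eta}, s(\mathbf{x}')\rangle,$$ where $s:\mathbb{X}\to\mathbb{R}^{\dim(\boldsymbol{\eta})}$. The natural parameter space is $\mathbb{N} = \{\boldsymbol{\eta} : \psi(\boldsymbol{\eta})<\infty\}$. **Neighborhood structures.** A neighborhood structure $\mathbf{z} = (\mathbf{z}_1,\dots,\mathbf{z}_n) \in \mathbb{Z}$ assigns each node to exactly one of $K$ neighborhoods. We write $z_{i,k}=1$ if node $i$ is in neighborhood $k$ and $z_{i,k}=0$ otherwise; $\mathbb{Z}$ is the set of all such assignments. $n_{\max}(\mathbf{z})$ denotes the size of the largest neighborhood under $\mathbf{z}$. For $\mathbf{z}$, let $\mathbf{X}_{k,k} = (X_{i,j})_{i<j:\, z_{i,k}=z_{j,k}=1}$ be the within-neighborhood edge variables of neighborhood $k$. **Parameterization.** The natural parameter is $\boldsymbol{\eta} = \boldsymbol{\eta}(\boldsymbol{\theta}, \mathbf{z})$, a map $\boldsymbol{\Theta}\times\mathbb{Z}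 \to \boldsymbol{\Xi} \subseteq \operatorname{int}(\mathbb{N})$. **Local dependence.** For every $(\boldsymbol{\theta},\mathbf{z})$, $$p_{\boldsymbol{\eta}(\boldsymbol{\theta},\mathbf{z})}(\mathbf{x}) = \prod_{k=1}^K \left[ p_{\boldsymbol{\eta}(\boldsymbol{\theta},\mathbf{z})}(\mathbf{x}_{k,k}) \prod_{l=1}^{k-1} \prod_{i,j:\, z_{i,k}=1,\, z_{j,l}=1} p_{\boldsymbol{\eta}(\boldsymbol{\theta},\mathbf{z})}(x_{i,j}) \right].$$ That is, within-neighborhood subgraphs and between-neighborhood edges are mutually independent. **Model structure.** $\boldsymbol{\theta} = (\boldsymbol{\theta}_1,\boldsymbol{\theta}_2)$. The exponent $\langle\boldsymbol{\eta}(\boldsymbol{\theta},\mathbf{z}), s(\mathbf{x})\rangle$ consists of two parts: - edge terms $\sum_{k\leq l}\theta_{1,k,l}\sum_{i<j} x_{i,j} z_{i,k} z_{j,l}$ with $\boldsymbol{\theta}_1 = (\theta_{1,k,l})_{k\le l}$; - additional within-neighborhood terms with parameter $\boldsymbol{\theta}_2$, which vanish when $\boldsymbol{\theta}_2=\mathbf{0}$. Consequently $p_{\boldsymbol{\eta}(\boldsymbol{\theta},\mathbf{z})}$ and $p_{\boldsymbol{\eta}(\boldsymbol{\theta}_1,\boldsymbol{\theta}_2=\mathbf{0},\mathbf{z})}$ impose the same law on between-neighborhood edges. The latter is a stochastic block model, in which all edges are independent given $\mathbf{z}$. **Block notation.** For $k\le l$, $\boldsymbol{\eta}_{k,l}(\boldsymbol{\theta}_{k,l},\mathbf{z})$,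 $\boldsymbol{\theta}_{k,l}$ and $s_{k,l}(\mathbf{x})$ denote the subvectors of $\boldsymbol{\eta}(\boldsymbol{\theta},\mathbf{z})$, $\boldsymbol{\theta}$ and $s(\mathbf{x})$ corresponding to the subgraph between neighborhoods $k$ and $l$ (if $k<l$), or within neighborhood $k$ (if $k=l$). Each $\boldsymbol{\Theta}_{k,l}$ is a compact subset of $\mathbb{R}^{\dim(\boldsymbol{\theta}_{k,l})}$. **Data-generating model.** $\mathbb{P}$ and $\mathbb{E}$ denote probability and expectation under $\boldsymbol{\eta}(\boldsymbol{\theta}^\star,\mathbf{z}^\star)$ for data-generating values $(\boldsymbol{\theta}^\star,\mathbf{z}^\star)\in\boldsymbol{\Theta}\times\mathbb{Z}$. The data-generating neighborhoods are $\mathscr{A}_1,\dots,\mathscr{A}_K$, and $\|\mathscr{A}\|_\infty = \max_k |\mathscr{A}_k|$. **Hamming metric.** $d(\mathbf{x}_1,\mathbf{x}_2) = \sum_{i<j}\mathbb{1}\{x_{1,i,j}\neq x_{2,i,j}\}$. **Condition [C.1].** There exist $c>0$ and $n_0>0$ such that for all $n>n_0$, all $\mathbf{z}\in\mathbb{Z}$, all $\boldsymbol{\eta}\in\mathbb{R}^{\dim(\boldsymbol{\eta})}$, and all $\mathbf{x}_1,\mathbf{x}_2\in\mathbb{X}$: $$|\langle\boldsymbol{\eta}, s(\mathbf{x}_1)-s(\mathbf{x}_2)\rangle| \le c\, d(\mathbf{x}_1,\mathbf{x}_2)\, n_{\max}(\mathbf{z})\log n.$$ **Condition [C.2].** There exist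 $c>0$ and $n_0>0$ such that for all $n>n_0$, all $k\le l$, all $\boldsymbol{\theta}_{k,l,1},\boldsymbol{\theta}_{k,l,2}\in\boldsymbol{\Theta}_{k,l}$, and all $(\boldsymbol{\theta},\mathbf{z})\in\boldsymbol{\Theta}\times\mathbb{Z}$: $$\left|\left\langle \boldsymbol{\eta}_{k,l}(\boldsymbol{\theta}_{k,l,1},\mathbf{z})-\boldsymbol{\eta}_{k,l}(\boldsymbol{\theta}_{k,l,2},\mathbf{z}),\ \mathbb{E}_{\boldsymbol{\eta}(\boldsymbol{\theta},\mathbf{z})}\, s_{k,l}(\mathbf{X})\right\rangle\right| \le c\,\|\boldsymbol{\theta}_{k,l,1}-\boldsymbol{\theta}_{k,l,2}\|_2\, n_{\max}(\mathbf{z})^2\log n.$$ *)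

theory Defs
  imports "HOL-Analysis.Analysis"
begin

(* Graph on nodes {1..n}: x (i,j) is the value of edge variable X_{i,j} for 1 <= i < j <= n
   (set to 0 outside these pairs). Neighborhood structure z: node i is in neighborhood z i,
   neighborhoods are labelled 0..K-1. Parameters theta = (theta1, theta2), with
   theta1 k l = theta_{1,k,l} (k <= l) and theta2 a vector of dimension d2. *)

type_synonym graph = "nat \<times> nat \<Rightarrow> real"
type_synonym nbh = "nat \<Rightarrow> nat"
type_synonym param = "(nat \<Rightarrow> nat \<Rightarrow> real) \<times> (nat \<Rightarrow> real)"
type_synonym blockpar = "real \<times> (nat \<Rightarrow> real)"

(* All objects are indexed by the number of nodes n *)
record model =
  Xs     :: "nat \<Rightarrow> nat \<times> nat \<Rightarrow> real set"
  dim    :: "nat \<Rightarrow> nat"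
  stat   :: "nat \<Rightarrow> graph \<Rightarrow> nat \<Rightarrow> real"        \<comment> \<open>s(x), coordinates 0..dim-1\<close>
  K      :: "nat \<Rightarrow> nat"
  eta    :: "nat \<Rightarrow> param \<Rightarrow> nbh \<Rightarrow> nat \<Rightarrow> real"
  Theta  :: "nat \<Rightarrow> param set"
  d2     :: "nat \<Rightarrow> nat"
  J      :: "nat \<Rightarrow> nat \<Rightarrow> nat set"              \<comment> \<open>coords of theta2 belonging to theta_{k,k}\<close>
  ThetaB :: "nat \<Rightarrow> nat \<Rightarrow> nat \<Rightarrow> blockpar set"
  B      :: "nat \<Rightarrow> nbh \<Rightarrow> nat \<Rightarrow> nat \<Rightarrow> nat set" \<comment> \<open>coords of eta, s forming block (k,l)\<close>
  etaB   :: "nat \<Rightarrow> nat \<Rightarrow> nat \<Rightarrow> blockpar \<Rightarrow> nbh \<Rightarrow> nat \<Rightarrow> real"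
  W      :: "nat \<Rightarrow> (nat \<Rightarrow> real) \<Rightarrow> nbh \<Rightarrow> graph \<Rightarrow> real" \<comment> \<open>within-neighborhood terms\<close>

definition pairs :: "nat \<Rightarrow> (nat \<times> nat) set" where
  "pairs n = {(i, j). 1 \<le> i \<and> i < j \<and> j \<le> n}"

definition graphs :: "model \<Rightarrow> nat \<Rightarrow> graph set" where
  "graphs M n = {x. (\<forall>p\<in>pairs n. x p \<in> Xs M n p) \<and> (\<forall>p. p \<notin> pairs n \<longrightarrow> x p = 0)}"

definition hamming :: "nat \<Rightarrow> graph \<Rightarrow> graph \<Rightarrow> nat" where
  "hamming n x1 x2 = card {p \<in> pairs n. x1 p \<noteq> x2 p}"

definition lin :: "model \<Rightarrow> nat \<Rightarrow> (nat \<Rightarrow> real) \<Rightarrow> graph \<Rightarrow> real" where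
  "lin M n e x = (\<Sum>m<dim M n. e m * stat M n x m)"

definition psi :: "model \<Rightarrow> nat \<Rightarrow> (nat \<Rightarrow> real) \<Rightarrow> real" where
  "psi M n e = ln (infsum (\<lambda>x. exp (lin M n e x)) (graphs M n))"

(* natural parameter space N = {eta. psi(eta) < infinity} *)
definition NatSp :: "model \<Rightarrow> nat \<Rightarrow> (nat \<Rightarrow> real) set" where
  "NatSp M n = {e. (\<lambda>x. exp (lin M n e x)) summable_on graphs M n}"

definition pm :: "model \<Rightarrow> nat \<Rightarrow> (nat \<Rightarrow> real) \<Rightarrow> graph \<Rightarrow> real" where
  "pm M n e x = exp (lin M n e x - psi M n e)"

definition Pr :: "model \<Rightarrow> nat \<Rightarrow> (nat \<Rightarrow> real) \<Rightarrow> graph set \<Rightarrow> real" where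
  "Pr M n e E = infsum (pm M n e) (graphs M n \<inter> E)"

definition Expect :: "model \<Rightarrow> nat \<Rightarrow> (nat \<Rightarrow> real) \<Rightarrow> (graph \<Rightarrow> real) \<Rightarrow> real" where
  "Expect M n e f = infsum (\<lambda>x. pm M n e x * f x) (graphs M n)"

definition marg :: "model \<Rightarrow> nat \<Rightarrow> (nat \<Rightarrow> real) \<Rightarrow> (nat \<times> nat) set \<Rightarrow> graph \<Rightarrow> real" where
  "marg M n e P x = infsum (pm M n e) {x' \<in> graphs M n. \<forall>p\<in>P. x' p = x p}"

definition nbhs :: "model \<Rightarrow> nat \<Rightarrow> nbh set" where
  "nbhs M n = {z. (\<forall>i\<in>{1..n}. z i < K M n) \<and> (\<forall>i. i \<notin> {1..n} \<longrightarrow> z i = 0)}"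

definition nmaxz :: "model \<Rightarrow> nat \<Rightarrow> nbh \<Rightarrow> nat" where
  "nmaxz M n z = Max ((\<lambda>k. card {i\<in>{1..n}. z i = k}) ` {..<K M n})"

definition wthn :: "nat \<Rightarrow> nbh \<Rightarrow> nat \<Rightarrow> (nat \<times> nat) set" where
  "wthn n z k = {p \<in> pairs n. z (fst p) = k \<and> z (snd p) = k}"

definition btwn :: "nat \<Rightarrow> nbh \<Rightarrow> nat \<Rightarrow> nat \<Rightarrow> (nat \<times> nat) set" where
  "btwn n z k l = {p \<in> pairs n. (z (fst p) = k \<and> z (snd p) = l) \<or> (z (fst p) = l \<and> z (snd p) = k)}"

definition subg :: "nat \<Rightarrow> nbh \<Rightarrow> nat \<Rightarrow> nat \<Rightarrow> (nat \<times> nat) set" where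
  "subg n z k l = (if k = l then wthn n z k else btwn n z k l)"

definition blk :: "model \<Rightarrow> nat \<Rightarrow> param \<Rightarrow> nat \<Rightarrow> nat \<Rightarrow> blockpar" where
  "blk M n th k l = (fst th k l, (\<lambda>m. if k = l \<and> m \<in> J M n k then snd th m else 0))"

definition blknorm :: "model \<Rightarrow> nat \<Rightarrow> blockpar \<Rightarrow> blockpar \<Rightarrow> real" where
  "blknorm M n a b = sqrt ((fst a - fst b)\<^sup>2 + (\<Sum>m<d2 M n. (snd a m - snd b m)\<^sup>2))"

definition zero2 :: "param \<Rightarrow> param" where
  "zero2 th = (fst th, (\<lambda>m. 0))"

definition edge_term :: "nat \<Rightarrow> nbh \<Rightarrow> (nat \<Rightarrow> nat \<Rightarrow> real) \<Rightarrow> graph \<Rightarrow> real" where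
  "edge_term n z th1 x =
     (\<Sum>(i, j)\<in>pairs n. th1 (min (z i) (z j)) (max (z i) (z j)) * x (i, j))"

definition setting :: "model \<Rightarrow> bool" where
  "setting M \<longleftrightarrow> (\<forall>n.
     (\<forall>p. countable (Xs M n p))
   \<and> 1 \<le> K M n \<and> (1 \<le> n \<longrightarrow> K M n \<le> n)
   \<and> (\<forall>th\<in>Theta M n. (\<forall>k l. \<not> (k \<le> l \<and> l < K M n) \<longrightarrow> fst th k l = 0)
                       \<and> (\<forall>m\<ge>d2 M n. snd th m = 0))
   \<and> (\<forall>k<K M n. J M n k \<subseteq> {..<d2 M n})
   \<and> (\<forall>k l. k \<le> l \<longrightarrow> l < K M n \<longrightarrow>
         compact (ThetaB M n k l)
       \<and> (\<forall>a\<in>ThetaB M n k l. \<forall>m. \<not> (k = l \<and> m \<in> J M n k) \<longrightarrow> snd a m = 0))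
   \<and> (\<forall>th\<in>Theta M n. \<forall>k l. k \<le> l \<longrightarrow> l < K M n \<longrightarrow> blk M n th k l \<in> ThetaB M n k l)
   \<and> (\<forall>th\<in>Theta M n. zero2 th \<in> Theta M n)
   \<comment> \<open>Xi subset of int(N)\<close>
   \<and> (\<forall>th\<in>Theta M n. \<forall>z\<in>nbhs M n. eta M n th z \<in> interior (NatSp M n))
   \<comment> \<open>block structure of eta and s\<close>
   \<and> (\<forall>z\<in>nbhs M n.
         (\<forall>k l. k \<le> l \<longrightarrow> l < K M n \<longrightarrow> B M n z k l \<subseteq> {..<dim M n})
       \<and> (\<forall>k l k' l'. k \<le> l \<longrightarrow> l < K M n \<longrightarrow> k' \<le> l' \<longrightarrow> l' < K M n \<longrightarrow> (k, l) \<noteq> (k', l')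
            \<longrightarrow> B M n z k l \<inter> B M n z k' l' = {})
       \<and> {..<dim M n} \<subseteq> (\<Union>(k, l)\<in>{(k, l). k \<le> l \<and> l < K M n}. B M n z k l)
       \<and> (\<forall>k l. k \<le> l \<longrightarrow> l < K M n \<longrightarrow> (\<forall>m\<in>B M n z k l. \<forall>x\<in>graphs M n. \<forall>x'\<in>graphs M n.
            (\<forall>p\<in>subg n z k l. x p = x' p) \<longrightarrow> stat M n x m = stat M n x' m))
       \<and> (\<forall>th\<in>Theta M n. \<forall>k l. k \<le> l \<longrightarrow> l < K M n \<longrightarrow> (\<forall>m\<in>B M n z k l.
            eta M n th z m = etaB M n k l (blk M n th k l) z m)))
   \<comment> \<open>model structure: edge terms plus within-neighborhood terms in theta2\<close>
   \<and> (\<forall>th\<in>Theta M n. \<forall>z\<in>nbhs M n. \<forall>x\<in>graphs M n.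
         lin M n (eta M n th z) x = edge_term n z (fst th) x + W M n (snd th) z x)
   \<and> (\<forall>z\<in>nbhs M n. \<forall>x\<in>graphs M n. W M n (\<lambda>m. 0) z x = 0)
   \<and> (\<forall>t2 z x x'. z \<in> nbhs M n \<longrightarrow> x \<in> graphs M n \<longrightarrow> x' \<in> graphs M n \<longrightarrow>
         (\<forall>k<K M n. \<forall>p\<in>wthn n z k. x p = x' p) \<longrightarrow> W M n t2 z x = W M n t2 z x')
   \<comment> \<open>local dependence\<close>
   \<and> (\<forall>th\<in>Theta M n. \<forall>z\<in>nbhs M n. \<forall>x\<in>graphs M n.
         pm M n (eta M n th z) x =
           (\<Prod>k<K M n. marg M n (eta M n th z) (wthn n z k) x *
              (\<Prod>l<k. \<Prod>p\<in>btwn n z l k. marg M n (eta M n th z) {p} x))))"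

definition cond_C1 :: "model \<Rightarrow> bool" where
  "cond_C1 M \<longleftrightarrow> (\<exists>c>0. \<exists>n0. \<forall>n>n0. \<forall>z\<in>nbhs M n. \<forall>th\<in>Theta M n.
     \<forall>x1\<in>graphs M n. \<forall>x2\<in>graphs M n.
       \<bar>lin M n (eta M n th z) x1 - lin M n (eta M n th z) x2\<bar>
         \<le> c * real (hamming n x1 x2) * real (nmaxz M n z) * ln (real n))"

definition cond_C2 :: "model \<Rightarrow> bool" where
  "cond_C2 M \<longleftrightarrow> (\<exists>c>0. \<exists>n0. \<forall>n>n0. \<forall>k l. k \<le> l \<longrightarrow> l < K M n \<longrightarrow>
     (\<forall>a\<in>ThetaB M n k l. \<forall>b\<in>ThetaB M n k l. \<forall>th\<in>Theta M n. \<forall>z\<in>nbhs M n.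
       \<bar>\<Sum>m\<in>B M n z k l. (etaB M n k l a z m - etaB M n k l b z m) *
            Expect M n (eta M n th z) (\<lambda>x. stat M n x m)\<bar>
         \<le> c * blknorm M n a b * real (nmaxz M n z)^2 * ln (real n)))"

end

theory Submission
  imports Defs
begin

text \<open>The event is in fact empty for large \<open>n\<close>. The two models differ only by the
within-neighbourhood term \<open>W\<close>, which depends on at most \<open>n \<cdot> n\<^sub>m\<^sub>a\<^sub>x(z)\<close> edge variables.
By [C.1], applied to both natural parameters, its oscillation over all graphs is
therefore at most \<open>2 c n n\<^sub>m\<^sub>a\<^sub>x(z)\<^sup>2 log n\<close>, and the same bound holds for the difference of
the log-normalising constants, hence for the log-likelihood ratio. This deterministic
bound lies below the threshold of the theorem.\<close>

lemma infsum_pos: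
  fixes f :: "'a \<Rightarrow> real"
  assumes "f summable_on A" and "x \<in> A" and "\<And>y. y \<in> A \<Longrightarrow> 0 < f y"
  shows "0 < infsum f A"
  by (rule has_sum_strict_mono[OF has_sum_0[where f = "\<lambda>_. 0"] has_sum_infsum[OF assms(1)] _ assms(2)])
    (use assms(2,3) in \<open>auto intro: less_imp_le\<close>)

lemma ln_infsum_exp_le:
  fixes f g :: "'a \<Rightarrow> real"
  assumes f: "(\<lambda>y. exp (f y)) summable_on A" and g: "(\<lambda>y. exp (g y)) summable_on A"
    and "x \<in> A" and le: "\<And>y. y \<in> A \<Longrightarrow> f y \<le> a + g y"
  shows "ln (infsum (\<lambda>y. exp (f y)) A) \<le> a + ln (infsum (\<lambda>y. exp (g y)) A)"
proof -
  have f_pos: "0 < infsum (\<lambda>y. exp (f y)) A" and g_pos: "0 < infsum (\<lambda>y. exp (g y)) A"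
    using infsum_pos[OF f \<open>x \<in> A\<close>] infsum_pos[OF g \<open>x \<in> A\<close>] by simp_all
  have "infsum (\<lambda>y. exp (f y)) A \<le> infsum (\<lambda>y. exp a * exp (g y)) A"
    using le by (intro infsum_mono f summable_on_cmult_right g) (simp add: exp_add[symmetric])
  also have "\<dots> = exp a * infsum (\<lambda>y. exp (g y)) A"
    by (rule infsum_cmult_right')
  finally show ?thesis
    using f_pos g_pos by (simp add: ln_mult ln_le_cancel_iff[symmetric])
qed

lemma ln_pm_diff_le:
  assumes e1: "e1 \<in> NatSp M n" and e0: "e0 \<in> NatSp M n" and x: "x \<in> graphs M n"
    and osc: "\<And>y. y \<in> graphs M n \<Longrightarrow>
      \<bar>(lin M n e1 x - lin M n e0 x) - (lin M n e1 y - lin M n e0 y)\<bar> \<le> \<Delta>"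
  shows "\<bar>ln (pm M n e1 x) - ln (pm M n e0 x)\<bar> \<le> \<Delta>"
proof -
  have s1: "(\<lambda>y. exp (lin M n e1 y)) summable_on graphs M n"
    and s0: "(\<lambda>y. exp (lin M n e0 y)) summable_on graphs M n"
    using e1 e0 by (simp_all add: NatSp_def)
  have "psi M n e1 \<le> (lin M n e1 x - lin M n e0 x + \<Delta>) + psi M n e0"
    unfolding psi_def
    by (rule ln_infsum_exp_le[OF s1 s0 x])
      (use osc in \<open>force simp: abs_le_iff\<close>)
  moreover have "psi M n e0 \<le> (\<Delta> - (lin M n e1 x - lin M n e0 x)) + psi M n e1"
    unfolding psi_def
    by (rule ln_infsum_exp_le[OF s0 s1 x])
      (use osc in \<open>force simp: abs_le_iff\<close>)
  ultimately show ?thesis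
    by (simp add: pm_def abs_le_iff)
qed

lemma card_within_pairs_le:
  assumes "z \<in> nbhs M n"
  shows "card {p \<in> pairs n. z (fst p) = z (snd p)} \<le> n * nmaxz M n z"
proof -
  let ?same = "\<lambda>i. {j \<in> {1..n}. z j = z i}"
  have "card {p \<in> pairs n. z (fst p) = z (snd p)} \<le> card (Sigma {1..n} ?same)"
    by (rule card_mono) (auto simp: pairs_def)
  also have "\<dots> = (\<Sum>i\<in>{1..n}. card (?same i))"
    by (rule card_SigmaI) auto
  also have "\<dots> \<le> (\<Sum>i\<in>{1..n}. nmaxz M n z)"
  proof (rule sum_mono)
    fix i assume "i \<in> {1..n}"
    then have "z i < K M n" using assms by (auto simp: nbhs_def)
    then show "card (?same i) \<le> nmaxz M n z"
      unfolding nmaxz_def by (intro Max_ge) auto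
  qed
  finally show ?thesis by simp
qed

lemma nmaxz_ge_1:
  assumes "z \<in> nbhs M n" and "1 \<le> n"
  shows "1 \<le> nmaxz M n z"
proof -
  have "z 1 < K M n" using assms by (auto simp: nbhs_def)
  then have "card {i \<in> {1..n}. z i = z 1} \<le> nmaxz M n z"
    unfolding nmaxz_def by (intro Max_ge) auto
  moreover have "card {i \<in> {1..n}. z i = z 1} \<noteq> 0"
    using assms(2) by (subst card_0_eq) auto
  ultimately show ?thesis by linarith
qed

lemma within_dependent_diff_oscillation_le:
  fixes g1 g0 f :: "graph \<Rightarrow> real"
  assumes z: "z \<in> nbhs M n"
    and diff: "\<And>y. y \<in> graphs M n \<Longrightarrow> g1 y - g0 y = f y"
    and within: "\<And>y y'. y \<in> graphs M n \<Longrightarrow> y' \<in> graphs M n \<Longrightarrow>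
      (\<forall>k<K M n. \<forall>p\<in>wthn n z k. y p = y' p) \<Longrightarrow> f y = f y'"
    and lip: "\<And>g y y'. g \<in> {g1, g0} \<Longrightarrow> y \<in> graphs M n \<Longrightarrow> y' \<in> graphs M n \<Longrightarrow>
      \<bar>g y - g y'\<bar> \<le> L * real (hamming n y y')"
    and "0 \<le> L" and x: "x \<in> graphs M n" and x': "x' \<in> graphs M n"
  shows "\<bar>f x - f x'\<bar> \<le> 2 * L * (real n * real (nmaxz M n z))"
proof -
  define same where "same = {p \<in> pairs n. z (fst p) = z (snd p)}"
  define y where "y = (\<lambda>p. if p \<in> same then x' p else x p)"
  have y: "y \<in> graphs M n"
    using x x' by (auto simp: graphs_def y_def same_def)
  have "f x' = f y"
    by (rule within[OF x' y]) (auto simp: y_def same_def wthn_def)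
  have "finite same"
    unfolding same_def pairs_def by (rule finite_subset[of _ "{1..n} \<times> {1..n}"]) auto
  then have "hamming n x y \<le> card same"
    unfolding hamming_def by (intro card_mono) (auto simp: y_def)
  also have "\<dots> \<le> n * nmaxz M n z"
    unfolding same_def by (rule card_within_pairs_le[OF z])
  finally have ham: "real (hamming n x y) \<le> real n * real (nmaxz M n z)"
    by (metis of_nat_le_iff of_nat_mult)
  have "\<bar>f x - f x'\<bar> = \<bar>(g1 x - g1 y) - (g0 x - g0 y)\<bar>"
    using diff[OF x] diff[OF y] \<open>f x' = f y\<close> by simp
  also have "\<dots> \<le> 2 * L * real (hamming n x y)"
    using lip[of g1 x y] lip[of g0 x y] x y by simp
  also have "\<dots> \<le> 2 * L * (real n * real (nmaxz M n z))"
    using ham \<open>0 \<le> L\<close> by (simp add: mult_left_mono)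
  finally show ?thesis .
qed

lemma setting_loglik_facts:
  assumes "setting M" and th: "th \<in> Theta M n" and z: "z \<in> nbhs M n"
  shows "zero2 th \<in> Theta M n"
    and "\<And>t x. t \<in> Theta M n \<Longrightarrow> x \<in> graphs M n \<Longrightarrow>
           lin M n (eta M n t z) x = edge_term n z (fst t) x + W M n (snd t) z x"
    and "\<And>x. x \<in> graphs M n \<Longrightarrow> W M n (\<lambda>m. 0) z x = 0"
    and "\<And>t2 x x'. x \<in> graphs M n \<Longrightarrow> x' \<in> graphs M n \<Longrightarrow>
           (\<forall>k<K M n. \<forall>p\<in>wthn n z k. x p = x' p) \<Longrightarrow> W M n t2 z x = W M n t2 z x'"
    and "\<And>t. t \<in> Theta M n \<Longrightarrow> eta M n t z \<in> NatSp M n"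
proof -
  note at_n = assms(1)[unfolded setting_def, THEN spec, of n]
  have "\<forall>th\<in>Theta M n. zero2 th \<in> Theta M n"
    using at_n by (elim conjE) assumption
  then show "zero2 th \<in> Theta M n" using th by blast
  have "\<forall>th\<in>Theta M n. \<forall>z\<in>nbhs M n. \<forall>x\<in>graphs M n.
         lin M n (eta M n th z) x = edge_term n z (fst th) x + W M n (snd th) z x"
    using at_n by (elim conjE) assumption
  then show "\<And>t x. t \<in> Theta M n \<Longrightarrow> x \<in> graphs M n \<Longrightarrow>
           lin M n (eta M n t z) x = edge_term n z (fst t) x + W M n (snd t) z x"
    using z by blast
  have "\<forall>z\<in>nbhs M n. \<forall>x\<in>graphs M n. W M n (\<lambda>m. 0) z x = 0"
    using at_n by (elim conjE) assumption
  then show "\<And>x. x \<in> graphs M n \<Longrightarrow> W M n (\<lambda>m. 0) z x = 0" using z by blast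
  have "\<forall>t2 z x x'. z \<in> nbhs M n \<longrightarrow> x \<in> graphs M n \<longrightarrow> x' \<in> graphs M n \<longrightarrow>
         (\<forall>k<K M n. \<forall>p\<in>wthn n z k. x p = x' p) \<longrightarrow> W M n t2 z x = W M n t2 z x'"
    using at_n by (elim conjE) assumption
  then show "\<And>t2 x x'. x \<in> graphs M n \<Longrightarrow> x' \<in> graphs M n \<Longrightarrow>
           (\<forall>k<K M n. \<forall>p\<in>wthn n z k. x p = x' p) \<Longrightarrow> W M n t2 z x = W M n t2 z x'"
    using z by blast
  have "\<forall>th\<in>Theta M n. \<forall>z\<in>nbhs M n. eta M n th z \<in> interior (NatSp M n)"
    using at_n by (elim conjE) assumption
  then show "\<And>t. t \<in> Theta M n \<Longrightarrow> eta M n t z \<in> NatSp M n"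
    using z interior_subset by blast
qed

lemma ln_pm_zero2_diff_le:
  assumes "setting M" and th: "th \<in> Theta M n" and z: "z \<in> nbhs M n" and x: "x \<in> graphs M n"
    and "0 \<le> c" and "1 \<le> n"
    and C1: "\<And>t x1 x2. t \<in> Theta M n \<Longrightarrow> x1 \<in> graphs M n \<Longrightarrow> x2 \<in> graphs M n \<Longrightarrow>
      \<bar>lin M n (eta M n t z) x1 - lin M n (eta M n t z) x2\<bar>
        \<le> c * real (hamming n x1 x2) * real (nmaxz M n z) * ln (real n)"
  shows "\<bar>ln (pm M n (eta M n th z) x) - ln (pm M n (eta M n (zero2 th) z) x)\<bar>
    \<le> 2 * c * real n * real (nmaxz M n z)^2 * ln (real n)"
proof -
  note facts = setting_loglik_facts[OF assms(1) th z]
  let ?g1 = "lin M n (eta M n th z)" and ?g0 = "lin M n (eta M n (zero2 th) z)"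
  let ?L = "c * real (nmaxz M n z) * ln (real n)"
  have diff: "\<And>y. y \<in> graphs M n \<Longrightarrow> ?g1 y - ?g0 y = W M n (snd th) z y"
    using facts(2)[OF th] facts(2)[OF facts(1)] facts(3) by (simp add: zero2_def)
  have "\<bar>(?g1 x - ?g0 x) - (?g1 y - ?g0 y)\<bar> \<le> 2 * ?L * (real n * real (nmaxz M n z))"
    if y: "y \<in> graphs M n" for y
    unfolding diff[OF x] diff[OF y]
  proof (rule within_dependent_diff_oscillation_le[OF z diff facts(4) _ _ x y])
    show "\<And>g y y'. g \<in> {?g1, ?g0} \<Longrightarrow> y \<in> graphs M n \<Longrightarrow> y' \<in> graphs M n \<Longrightarrow>
      \<bar>g y - g y'\<bar> \<le> ?L * real (hamming n y y')"
      using C1[OF th] C1[OF facts(1)] by (fastforce simp: mult_ac)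
    show "0 \<le> ?L" using \<open>0 \<le> c\<close> \<open>1 \<le> n\<close> by simp
  qed
  then show ?thesis
    by (intro ln_pm_diff_le[OF facts(5)[OF th] facts(5)[OF facts(1)] x])
      (simp add: power2_eq_square mult_ac)
qed

lemma threshold_dominates:
  fixes c nz nm ns L n d :: real
  assumes "0 \<le> c" "1 \<le> nz" "nz \<le> nm" "1 \<le> ns" "1 \<le> L" "0 < d" "1 \<le> n"
  shows "2 * c * n * nz^2 * L < (2 * c + 1) * sqrt (1 + d) * ns^2 * nm^2 * n * L powr (3/2)"
proof -
  have "nz^2 \<le> nm^2"
    using assms by (intro power_mono) auto
  have "L \<le> L powr (3/2)"
    using assms powr_mono[of 1 "3/2" L] by simp
  have "1 \<le> sqrt (1 + d) * ns^2"
    using assms mult_mono[of 1 "sqrt (1 + d)" 1 "ns^2"] by (simp add: one_le_power)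
  have "0 \<le> n * nm^2 * L powr (3/2)"
    using assms by simp
  have "2 * c * n * nz^2 * L \<le> 2 * c * (n * nm^2 * L)"
    using \<open>nz^2 \<le> nm^2\<close> assms by (simp add: mult_left_mono mult_right_mono)
  also have "\<dots> < (2 * c + 1) * (n * nm^2 * L)"
    using assms by (simp add: algebra_simps)
  also have "\<dots> \<le> (2 * c + 1) * (n * nm^2 * L powr (3/2))"
    using \<open>L \<le> L powr (3/2)\<close> assms by (intro mult_left_mono) auto
  also have "\<dots> \<le> (2 * c + 1) * (sqrt (1 + d) * ns^2 * (n * nm^2 * L powr (3/2)))"
    using mult_right_mono[OF \<open>1 \<le> sqrt (1 + d) * ns^2\<close> \<open>0 \<le> n * nm^2 * L powr (3/2)\<close>] assms
    by (intro mult_left_mono) auto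
  finally show ?thesis by (simp add: mult_ac)
qed

theorem theorem1:
  fixes M :: model
    and th :: "nat \<Rightarrow> param"        \<comment> \<open>the fixed theta (one for each n)\<close>
    and thstar :: "nat \<Rightarrow> param"    \<comment> \<open>data-generating theta*\<close>
    and zstar :: "nat \<Rightarrow> nbh"       \<comment> \<open>data-generating z*\<close>
    and S :: "nat \<Rightarrow> nbh set"
    and nmax :: "nat \<Rightarrow> real"
  assumes "setting M" and "cond_C1 M" and "cond_C2 M"
    and "\<And>n. th n \<in> Theta M n"
    and "\<And>n. thstar n \<in> Theta M n" and "\<And>n. zstar n \<in> nbhs M n"
    and "\<And>n. S n \<subseteq> nbhs M n"
    and "\<And>n z. z \<in> S n \<Longrightarrow> real (nmaxz M n z) \<le> nmax n"
    and "\<And>n. nmax n \<le> real n"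
  shows "\<forall>\<delta>>0. \<exists>c>0. \<exists>n0. \<forall>n>n0.
    Pr M n (eta M n (thstar n) (zstar n))
      {x. \<exists>z\<in>S n. \<bar>ln (pm M n (eta M n (th n) z) x) - ln (pm M n (eta M n (zero2 (th n)) z) x)\<bar>
            \<ge> c * sqrt (1 + \<delta>) * real (nmaxz M n (zstar n))^2 * (nmax n)^2 * real n * ln (real n) powr (3/2)}
    \<le> 2 * exp (- (\<delta> * real n * ln (real n) / 4))"
proof -
  from assms(2) obtain c n0 where "0 < c" and C1: "\<forall>n>n0. \<forall>z\<in>nbhs M n. \<forall>th\<in>Theta M n.
     \<forall>x1\<in>graphs M n. \<forall>x2\<in>graphs M n.
       \<bar>lin M n (eta M n th z) x1 - lin M n (eta M n th z) x2\<bar>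
         \<le> c * real (hamming n x1 x2) * real (nmaxz M n z) * ln (real n)"
    unfolding cond_C1_def by blast
  show ?thesis
  proof (intro allI impI exI[of _ "2 * c + 1"] conjI exI[of _ "max n0 3"])
    fix \<delta> :: real and n assume "0 < \<delta>" and n: "max n0 3 < n"
    have "1 \<le> ln (real n)"
      using n exp_le by (subst ln_ge_iff) auto
    let ?thr = "(2 * c + 1) * sqrt (1 + \<delta>) * real (nmaxz M n (zstar n))^2 * (nmax n)^2 * real n
      * ln (real n) powr (3/2)"
    let ?E = "{x. \<exists>z\<in>S n.
      \<bar>ln (pm M n (eta M n (th n) z) x) - ln (pm M n (eta M n (zero2 (th n)) z) x)\<bar> \<ge> ?thr}"
    have "\<bar>ln (pm M n (eta M n (th n) z) x) - ln (pm M n (eta M n (zero2 (th n)) z) x)\<bar> < ?thr"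
      if x: "x \<in> graphs M n" and "z \<in> S n" for x z
    proof -
      have z: "z \<in> nbhs M n" using \<open>z \<in> S n\<close> assms(7) by blast
      have "\<bar>ln (pm M n (eta M n (th n) z) x) - ln (pm M n (eta M n (zero2 (th n)) z) x)\<bar>
          \<le> 2 * c * real n * real (nmaxz M n z)^2 * ln (real n)"
        by (rule ln_pm_zero2_diff_le[OF assms(1,4) z x]) (use C1 n z \<open>0 < c\<close> in auto)
      also have "\<dots> < ?thr"
        by (rule threshold_dominates)
          (use \<open>z \<in> S n\<close> assms(8) nmaxz_ge_1[OF z] nmaxz_ge_1[OF assms(6)] n \<open>0 < c\<close> \<open>0 < \<delta>\<close>
            \<open>1 \<le> ln (real n)\<close> in auto)
      finally show ?thesis .
    qed
    then have "graphs M n \<inter> ?E = {}" by (force simp: not_le)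
    then show "Pr M n (eta M n (thstar n) (zstar n)) ?E \<le> 2 * exp (- (\<delta> * real n * ln (real n) / 4))"
      by (simp add: Pr_def)
  qed (use \<open>0 < c\<close> in simp)
qed

end
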